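(* Let $P$ be a finite poset and $\Sigma\colon P\to\mathbf{SimpComp}$ a functor, with colimit $K$ (a finite simplicial complex) and canonical injective simplicial maps $i_p\colon\Sigma_p\hookrightarrow K$ inducing order embeddings $\iota_p\colon F(\Sigma_p)\hookrightarrow F(K)$. If $\sigma\le\tau$ in $F(K)$, then there exists $p\in P$ with $\tau\in\iota_p(F(\Sigma_p))$, and for this $p$ the whole interval $[\sigma,\tau]=\{x\in F(K):\sigma\le x\le\tau\}$ is contained in $\iota_p(F(\Sigma_p))$.
   Context: $\mathbf{SimpComp}$ is the category of finite simplicial complexes and injective simplicial maps; $\Sigma_p=\Sigma(p)$. The colimit $K$ is formed by gluing the $\Sigma_p$ along the diagram maps: its vertex set is $\bigsqcup_p V(\Sigma_p)$ modulo the equivalence relation generated by $x\sim\Sigma(p\le q)(x)$, and its simplices are the classes of simplices of the $\Sigma_p$. For a simplicial complex $X$, $F(X)$ denotes its face poset: the set of simplices ordered by inclusion. *)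

theory Defs
  imports Main
begin

definition simplicial_complex :: "'v set \<Rightarrow> 'v set set \<Rightarrow> bool" where
  "simplicial_complex V S \<longleftrightarrow> finite V \<and> (\<forall>s\<in>S. s \<noteq> {} \<and> s \<subseteq> V)
     \<and> (\<forall>v\<in>V. {v} \<in> S) \<and> (\<forall>s\<in>S. \<forall>t. t \<subseteq> s \<and> t \<noteq> {} \<longrightarrow> t \<in> S)"

definition inj_simplicial_map :: "'v set \<Rightarrow> 'v set set \<Rightarrow> 'w set \<Rightarrow> 'w set set \<Rightarrow> ('v \<Rightarrow> 'w) \<Rightarrow> bool" where
  "inj_simplicial_map V1 S1 V2 S2 g \<longleftrightarrow> g ` V1 \<subseteq> V2 \<and> inj_on g V1 \<and> (\<forall>s\<in>S1. g ` s \<in> S2)"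

text \<open>A functor from the finite poset P (the order of type 'p restricted to P) to SimpComp:
  object p is the complex (V p, S p), the arrow p \<le> q is the map f p q.\<close>
definition simpcomp_functor :: "'p::order set \<Rightarrow> ('p \<Rightarrow> 'v set) \<Rightarrow> ('p \<Rightarrow> 'v set set)
     \<Rightarrow> ('p \<Rightarrow> 'p \<Rightarrow> 'v \<Rightarrow> 'v) \<Rightarrow> bool" where
  "simpcomp_functor P V S f \<longleftrightarrow> finite P
     \<and> (\<forall>p\<in>P. simplicial_complex (V p) (S p))
     \<and> (\<forall>p\<in>P. \<forall>q\<in>P. p \<le> q \<longrightarrow> inj_simplicial_map (V p) (S p) (V q) (S q) (f p q))
     \<and> (\<forall>p\<in>P. \<forall>x\<in>V p. f p p x = x)
     \<and> (\<forall>p\<in>P. \<forall>q\<in>P. \<forall>r\<in>P. p \<le> q \<longrightarrow> q \<le> r \<longrightarrow> (\<forall>x\<in>V p. f q r (f p q x) = f p r x))"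

text \<open>Generating relation on the disjoint union of the vertex sets: x ~ \<Sigma>(p\<le>q)(x).\<close>
definition colim_gen :: "'p::order set \<Rightarrow> ('p \<Rightarrow> 'v set) \<Rightarrow> ('p \<Rightarrow> 'p \<Rightarrow> 'v \<Rightarrow> 'v)
     \<Rightarrow> (('p \<times> 'v) \<times> ('p \<times> 'v)) set" where
  "colim_gen P V f = {((p, x), (q, f p q x)) | p q x. p \<in> P \<and> q \<in> P \<and> p \<le> q \<and> x \<in> V p}"

definition colim_rel :: "'p::order set \<Rightarrow> ('p \<Rightarrow> 'v set) \<Rightarrow> ('p \<Rightarrow> 'p \<Rightarrow> 'v \<Rightarrow> 'v)
     \<Rightarrow> (('p \<times> 'v) \<times> ('p \<times> 'v)) set" where
  "colim_rel P V f = (colim_gen P V f \<union> (colim_gen P V f)\<inverse>)\<^sup>*"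

definition colim_vertex :: "'p::order set \<Rightarrow> ('p \<Rightarrow> 'v set) \<Rightarrow> ('p \<Rightarrow> 'p \<Rightarrow> 'v \<Rightarrow> 'v)
     \<Rightarrow> 'p \<Rightarrow> 'v \<Rightarrow> ('p \<times> 'v) set" where
  "colim_vertex P V f p x = colim_rel P V f `` {(p, x)}"

definition colim_face :: "'p::order set \<Rightarrow> ('p \<Rightarrow> 'v set) \<Rightarrow> ('p \<Rightarrow> 'p \<Rightarrow> 'v \<Rightarrow> 'v)
     \<Rightarrow> 'p \<Rightarrow> 'v set \<Rightarrow> ('p \<times> 'v) set set" where
  "colim_face P V f p s = colim_vertex P V f p ` s"

definition colim_simplices :: "'p::order set \<Rightarrow> ('p \<Rightarrow> 'v set) \<Rightarrow> ('p \<Rightarrow> 'v set set)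
     \<Rightarrow> ('p \<Rightarrow> 'p \<Rightarrow> 'v \<Rightarrow> 'v) \<Rightarrow> ('p \<times> 'v) set set set" where
  "colim_simplices P V S f = {colim_face P V f p s | p s. p \<in> P \<and> s \<in> S p}"

end

theory Submission
  imports Defs
begin

text \<open>Every simplex of the colimit is the image \<open>\<iota>\<^sub>p(s)\<close> of some simplex \<open>s\<close> of some \<open>\<Sigma>\<^sub>p\<close>.
  Given \<open>\<tau> = \<iota>\<^sub>p(s)\<close>, a nonempty \<open>x \<subseteq> \<tau>\<close> is the image of the nonempty face
  \<open>{v \<in> s. i\<^sub>p(v) \<in> x}\<close> of \<open>s\<close>, which is a simplex of \<open>\<Sigma>\<^sub>p\<close> by downward closure; so the
  whole interval below \<open>\<tau>\<close>, not only \<open>[\<sigma>, \<tau>]\<close>, lies in \<open>\<iota>\<^sub>p(F(\<Sigma>\<^sub>p))\<close>.\<close>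

lemma simplicial_complex_simplex_nonempty:
  assumes "simplicial_complex V S" and "s \<in> S"
  shows "s \<noteq> {}"
  using assms unfolding simplicial_complex_def by blast

lemma simplicial_complex_face_closed:
  assumes "simplicial_complex V S" and "s \<in> S" and "t \<subseteq> s" and "t \<noteq> {}"
  shows "t \<in> S"
  using assms unfolding simplicial_complex_def by blast

lemma simplicial_complex_image_faces_downward_closed:
  assumes "simplicial_complex V S" and "s \<in> S" and "x \<subseteq> g ` s" and "x \<noteq> {}"
  shows "x \<in> (`) g ` S"
proof -
  obtain t where "t \<subseteq> s" and x_eq: "x = g ` t"
    using \<open>x \<subseteq> g ` s\<close> subset_image_iff by metis
  with \<open>x \<noteq> {}\<close> have "t \<in> S"
    using simplicial_complex_face_closed[OF assms(1,2)] by (metis image_empty)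
  then show ?thesis unfolding x_eq by (rule imageI)
qed

lemma simpcomp_functor_simplicial_complex:
  assumes "simpcomp_functor P V S f" and "p \<in> P"
  shows "simplicial_complex (V p) (S p)"
  using assms by (simp add: simpcomp_functor_def)

lemma colim_face_eq_image: "colim_face P V f p = (`) (colim_vertex P V f p)"
  by (rule ext) (simp add: colim_face_def)

lemma colim_simplices_iff:
  "x \<in> colim_simplices P V S f \<longleftrightarrow> (\<exists>p\<in>P. x \<in> colim_face P V f p ` S p)"
  unfolding colim_simplices_def by auto

lemma colim_simplex_nonempty:
  assumes "simpcomp_functor P V S f" and "x \<in> colim_simplices P V S f"
  shows "x \<noteq> {}"
proof -
  obtain p s where "p \<in> P" and "s \<in> S p" and "x = colim_vertex P V f p ` s"
    using assms(2) unfolding colim_simplices_iff colim_face_eq_image by blast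
  moreover have "s \<noteq> {}"
    using simplicial_complex_simplex_nonempty
      [OF simpcomp_functor_simplicial_complex[OF assms(1) \<open>p \<in> P\<close>] \<open>s \<in> S p\<close>] .
  ultimately show ?thesis by simp
qed

lemma colim_face_downward_closed:
  assumes "simpcomp_functor P V S f" and "p \<in> P" and "\<tau> \<in> colim_face P V f p ` S p"
    and "x \<in> colim_simplices P V S f" and "x \<subseteq> \<tau>"
  shows "x \<in> colim_face P V f p ` S p"
proof -
  obtain s where "s \<in> S p" and "\<tau> = colim_vertex P V f p ` s"
    using assms(3) unfolding colim_face_eq_image by blast
  with \<open>x \<subseteq> \<tau>\<close> have "x \<in> (`) (colim_vertex P V f p) ` S p"
    using simplicial_complex_image_faces_downward_closed
      [OF simpcomp_functor_simplicial_complex[OF assms(1,2)] \<open>s \<in> S p\<close>]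
      colim_simplex_nonempty[OF assms(1,4)]
    by simp
  then show ?thesis
    unfolding colim_face_eq_image .
qed

theorem lemma5p12:
  fixes P :: "'p::order set" and V :: "'p \<Rightarrow> 'v set" and S :: "'p \<Rightarrow> 'v set set"
    and f :: "'p \<Rightarrow> 'p \<Rightarrow> 'v \<Rightarrow> 'v"
    and \<sigma> \<tau> :: "('p \<times> 'v) set set"
  assumes "simpcomp_functor P V S f"
    and "\<sigma> \<in> colim_simplices P V S f" and "\<tau> \<in> colim_simplices P V S f"
    and "\<sigma> \<subseteq> \<tau>"
  shows "(\<exists>p\<in>P. \<tau> \<in> colim_face P V f p ` S p)
    \<and> (\<forall>p\<in>P. \<tau> \<in> colim_face P V f p ` S p \<longrightarrow>
          {x \<in> colim_simplices P V S f. \<sigma> \<subseteq> x \<and> x \<subseteq> \<tau>} \<subseteq> colim_face P V f p ` S p)"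
proof
  show "\<exists>p\<in>P. \<tau> \<in> colim_face P V f p ` S p"
    using assms(3) unfolding colim_simplices_iff .
  show "\<forall>p\<in>P. \<tau> \<in> colim_face P V f p ` S p \<longrightarrow>
      {x \<in> colim_simplices P V S f. \<sigma> \<subseteq> x \<and> x \<subseteq> \<tau>} \<subseteq> colim_face P V f p ` S p"
    using colim_face_downward_closed[OF assms(1)] by blast
qed

end
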